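(* There exists a system of $78$ distinct lines through the origin in $\mathbb{R}^{11}$ whose angle set is $\{\tfrac13,\tfrac{1}{\sqrt{11}},\tfrac{1}{11},0\}$; in particular its coherence is $\tfrac13$.
   Context: For a line system $(l_j)_{j\in S}$ with unit vectors $\phi_j$ spanning $l_j$, the angle set is $\{|\langle\phi_i,\phi_j\rangle| : i\neq j\}$ and the coherence is the maximum of the angle set. *)

theory Defs
  imports "HOL-Analysis.Analysis"
begin

text \<open>A line system is given by a family of unit vectors phi indexed by S;
  line j is span of phi j.  Angle set and coherence as in the paper.\<close>

definition angle_set :: "('i \<Rightarrow> 'a::real_inner) \<Rightarrow> 'i set \<Rightarrow> real set" where
  "angle_set phi S = {\<bar>phi i \<bullet> phi j\<bar> | i j. i \<in> S \<and> j \<in> S \<and> i \<noteq> j}"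

definition coherence :: "('i \<Rightarrow> 'a::real_inner) \<Rightarrow> 'i set \<Rightarrow> real" where
  "coherence phi S = Sup (angle_set phi S)"

end

theory Submission
  imports Defs
begin

text \<open>The lines are spanned by 78 integer vectors: the 11 standard basis vectors, 12 vectors
  with entries \<open>\<plusminus>1\<close>, and 55 vectors with two zero and nine \<open>\<plusminus>1\<close> entries, of squared lengths
  1, 11 and 9. For integer vectors \<open>x, y\<close> the absolute cosine is
  \<open>\<bar>\<langle>x,y\<rangle>\<bar> / sqrt (\<parallel>x\<parallel>\<^sup>2 \<parallel>y\<parallel>\<^sup>2)\<close>, which lies in \<open>{1/3, 1/sqrt 11, 1/11, 0}\<close> as soon as
  \<open>\<langle>x,y\<rangle> = 0\<close> or \<open>c \<langle>x,y\<rangle>\<^sup>2 = \<parallel>x\<parallel>\<^sup>2 \<parallel>y\<parallel>\<^sup>2\<close> for some \<open>c \<in> {9, 11, 121}\<close>. This integer condition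
  is checked for all 3003 pairs by evaluation inside the logic. No absolute cosine equals 1, so
  the lines are distinct, and the largest value is 1/3.\<close>

definition int_inner :: "int list \<Rightarrow> int list \<Rightarrow> int" where
  "int_inner xs ys = sum_list (map2 (*) xs ys)"

definition vec_of_list :: "int list \<Rightarrow> real ^ 'a::finite bit1" where
  "vec_of_list xs = (\<chi> k. of_int (xs ! nat (Rep_bit1 k)))"

definition admissible_angle :: "int list \<Rightarrow> int list \<Rightarrow> bool" where
  "admissible_angle x y \<longleftrightarrow>
     int_inner x y = 0 \<or> (\<exists>c\<in>{9, 11, 121}. c * (int_inner x y)\<^sup>2 = int_inner x x * int_inner y y)"

lemma sum_UNIV_bit1:
  "(\<Sum>k\<in>(UNIV :: 'a::finite bit1 set). g (nat (Rep_bit1 k))) = (\<Sum>i<CARD('a bit1). g i)"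
proof (rule sum.reindex_bij_witness[where i="\<lambda>i. Abs_bit1 (int i)" and j="\<lambda>k. nat (Rep_bit1 k)"])
  fix k :: "'a bit1"
  have "Rep_bit1 k \<in> {0..<1 + 2 * int CARD('a)}" by (rule Rep_bit1)
  then show "Abs_bit1 (int (nat (Rep_bit1 k))) = k" "nat (Rep_bit1 k) \<in> {..<CARD('a bit1)}"
    by (auto simp: Rep_bit1_inverse nat_less_iff)
next
  fix i assume "i \<in> {..<CARD('a bit1)}"
  then show "nat (Rep_bit1 (Abs_bit1 (int i) :: 'a bit1)) = i"
    by (simp add: Abs_bit1_inverse)
qed auto

lemma inner_vec_of_list:
  assumes "length xs = CARD('a bit1)" "length ys = CARD('a bit1)"
  shows "(vec_of_list xs :: real ^ 'a::finite bit1) \<bullet> vec_of_list ys = of_int (int_inner xs ys)"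
proof -
  have "(vec_of_list xs :: real ^ 'a bit1) \<bullet> vec_of_list ys
      = (\<Sum>k\<in>UNIV. of_int (xs ! nat (Rep_bit1 k)) * of_int (ys ! nat (Rep_bit1 (k :: 'a bit1))))"
    by (simp add: inner_vec_def vec_of_list_def)
  also have "\<dots> = (\<Sum>i<CARD('a bit1). of_int (xs ! i) * of_int (ys ! i))"
    by (rule sum_UNIV_bit1)
  also have "\<dots> = of_int (int_inner xs ys)"
    using assms by (simp add: int_inner_def sum_list_sum_nth atLeast0LessThan)
  finally show ?thesis .
qed

lemma abs_inner_sgn:
  fixes x y :: "'a::real_inner"
  shows "\<bar>sgn x \<bullet> sgn y\<bar> = \<bar>x \<bullet> y\<bar> / (norm x * norm y)"
  by (simp add: sgn_div_norm abs_mult divide_inverse mult_ac)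

lemma abs_inner_sgn_vec_of_list:
  assumes "length x = CARD('a bit1)" "length y = CARD('a bit1)"
  shows "\<bar>sgn (vec_of_list x :: real ^ 'a::finite bit1) \<bullet> sgn (vec_of_list y)\<bar>
    = \<bar>of_int (int_inner x y)\<bar> / sqrt (of_int (int_inner x x * int_inner y y))"
  using assms by (simp add: abs_inner_sgn norm_eq_sqrt_inner inner_vec_of_list real_sqrt_mult)

lemma abs_cos_admissible:
  assumes "admissible_angle x y"
  shows "\<bar>of_int (int_inner x y)\<bar> / sqrt (of_int (int_inner x x * int_inner y y))
    \<in> {1/3, 1 / sqrt 11, 1/11, 0 :: real}"
proof -
  let ?a = "int_inner x y" and ?m = "int_inner x x * int_inner y y"
  have cos: "\<bar>of_int ?a\<bar> / sqrt (of_int ?m) = 1 / sqrt (of_int c :: real)"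
    if "c * ?a\<^sup>2 = ?m" "?a \<noteq> 0" for c :: int
  proof -
    have "sqrt (of_int ?m) = sqrt (of_int c) * \<bar>of_int ?a :: real\<bar>"
      by (simp flip: that(1) add: real_sqrt_mult)
    then show ?thesis using that(2) by simp
  qed
  from assms consider "?a = 0" | c where "c \<in> {9, 11, 121}" "c * ?a\<^sup>2 = ?m" "?a \<noteq> 0"
    unfolding admissible_angle_def by blast
  then show ?thesis
  proof cases
    case (2 c)
    from \<open>c \<in> {9, 11, 121}\<close> have "1 / sqrt (of_int c) \<in> {1/3, 1 / sqrt 11, 1/11, 0 :: real}"
      by (auto simp: real_sqrt_eq_iff)
    then show ?thesis by (simp only: cos[OF 2(2,3)])
  qed simp
qed

lemma inj_on_span_singleton:
  fixes \<phi> :: "'i \<Rightarrow> 'a::real_inner"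
  assumes unit: "\<forall>i\<in>S. norm (\<phi> i) = 1" and "1 \<notin> angle_set \<phi> S"
  shows "inj_on (\<lambda>i. span {\<phi> i}) S"
proof (rule inj_onI, rule ccontr)
  fix i j assume i: "i \<in> S" and j: "j \<in> S" and "span {\<phi> i} = span {\<phi> j}" and "i \<noteq> j"
  then have "\<bar>\<phi> i \<bullet> \<phi> j\<bar> \<in> angle_set \<phi> S"
    unfolding angle_set_def by blast
  moreover obtain c where c: "\<phi> j = c *\<^sub>R \<phi> i"
    using \<open>span {\<phi> i} = span {\<phi> j}\<close> span_base[of "\<phi> j" "{\<phi> j}"] by (auto simp: span_singleton)
  then have "norm (\<phi> j) = \<bar>c\<bar>" using unit i by simp
  then have "\<bar>c\<bar> = 1" using unit j by simp
  with c have "\<bar>\<phi> i \<bullet> \<phi> j\<bar> = 1"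
    using unit i by (simp add: abs_mult flip: power2_norm_eq_inner)
  ultimately show False using assms(2) by simp
qed

definition line_vectors :: "int list list" where
  "line_vectors =
   [[1, 0, 0, 0, 0, 0, 0, 0, 0, 0, 0],
    [0, 1, 0, 0, 0, 0, 0, 0, 0, 0, 0],
    [0, 0, 1, 0, 0, 0, 0, 0, 0, 0, 0],
    [0, 0, 0, 1, 0, 0, 0, 0, 0, 0, 0],
    [0, 0, 0, 0, 1, 0, 0, 0, 0, 0, 0],
    [0, 0, 0, 0, 0, 1, 0, 0, 0, 0, 0],
    [0, 0, 0, 0, 0, 0, 1, 0, 0, 0, 0],
    [0, 0, 0, 0, 0, 0, 0, 1, 0, 0, 0],
    [0, 0, 0, 0, 0, 0, 0, 0, 1, 0, 0],
    [0, 0, 0, 0, 0, 0, 0, 0, 0, 1, 0],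
    [0, 0, 0, 0, 0, 0, 0, 0, 0, 0, 1],
    [-1, 1, -1, 1, 1, 1, -1, -1, -1, 1, -1],
    [-1, -1, 1, -1, 1, 1, 1, -1, -1, -1, 1],
    [1, -1, -1, 1, -1, 1, 1, 1, -1, -1, -1],
    [-1, 1, -1, -1, 1, -1, 1, 1, 1, -1, -1],
    [-1, -1, 1, -1, -1, 1, -1, 1, 1, 1, -1],
    [-1, -1, -1, 1, -1, -1, 1, -1, 1, 1, 1],
    [1, -1, -1, -1, 1, -1, -1, 1, -1, 1, 1],
    [1, 1, -1, -1, -1, 1, -1, -1, 1, -1, 1],
    [1, 1, 1, -1, -1, -1, 1, -1, -1, 1, -1],
    [-1, 1, 1, 1, -1, -1, -1, 1, -1, -1, 1],
    [1, -1, 1, 1, 1, -1, -1, -1, 1, -1, -1],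
    [1, 1, 1, 1, 1, 1, 1, 1, 1, 1, 1],
    [0, 0, 1, -1, -1, 1, 1, -1, 1, 1, 1],
    [0, 1, 0, 1, 1, -1, 1, -1, 1, 1, -1],
    [0, 1, -1, 0, -1, -1, -1, -1, -1, 1, 1],
    [0, 1, -1, -1, 0, 1, 1, -1, -1, -1, -1],
    [0, 1, -1, 1, -1, 0, 1, 1, 1, -1, 1],
    [0, 1, 1, 1, -1, 1, 0, 1, -1, 1, -1],
    [0, 1, 1, -1, -1, -1, -1, 0, 1, -1, -1],
    [0, 1, 1, 1, 1, 1, -1, -1, 0, -1, 1],
    [0, 1, 1, -1, 1, -1, 1, 1, -1, 0, 1],
    [0, 1, -1, -1, 1, 1, -1, 1, 1, 1, 0],
    [1, 0, 0, 1, -1, -1, 1, 1, -1, 1, 1],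
    [1, 0, -1, 0, -1, -1, 1, -1, 1, -1, -1],
    [1, 0, 1, -1, 0, -1, -1, -1, -1, -1, 1],
    [1, 0, -1, 1, 1, 0, -1, -1, 1, 1, 1],
    [1, 0, 1, -1, 1, -1, 0, 1, 1, 1, -1],
    [1, 0, -1, -1, -1, 1, -1, 0, -1, 1, -1],
    [1, 0, -1, -1, 1, 1, 1, 1, 0, -1, 1],
    [1, 0, 1, 1, 1, 1, 1, -1, -1, 0, -1],
    [1, 0, 1, 1, -1, 1, -1, 1, 1, -1, 0],
    [1, 1, 0, 0, 1, -1, -1, 1, 1, -1, 1],
    [1, -1, 0, 1, 0, 1, 1, -1, 1, -1, 1],
    [1, 1, 0, 1, -1, 0, -1, -1, -1, -1, -1],
    [1, 1, 0, -1, 1, 1, 0, -1, -1, 1, 1],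
    [1, -1, 0, -1, 1, -1, 1, 0, -1, -1, -1],
    [1, -1, 0, 1, 1, 1, -1, 1, 0, 1, -1],
    [1, 1, 0, -1, -1, 1, 1, 1, 1, 0, -1],
    [1, -1, 0, -1, -1, -1, -1, -1, 1, 1, 0],
    [1, 1, 1, 0, 0, 1, -1, -1, 1, 1, -1],
    [1, 1, -1, 0, 1, 0, 1, 1, -1, 1, -1],
    [1, -1, -1, 0, -1, 1, 0, 1, 1, 1, 1],
    [1, 1, 1, 0, -1, 1, 1, 0, -1, -1, 1],
    [1, -1, 1, 0, 1, -1, 1, -1, 0, 1, 1],
    [1, -1, 1, 0, -1, -1, -1, 1, -1, 0, -1],
    [1, -1, -1, 0, 1, 1, -1, -1, -1, -1, 0],
    [1, -1, -1, -1, 0, 0, -1, 1, 1, -1, -1],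
    [1, -1, -1, 1, 0, -1, 0, -1, -1, 1, -1],
    [1, 1, -1, -1, 0, -1, 1, 0, 1, 1, 1],
    [1, 1, 1, 1, 0, -1, 1, 1, 0, -1, -1],
    [1, 1, -1, 1, 0, 1, -1, 1, -1, 0, 1],
    [1, -1, 1, -1, 0, 1, 1, 1, -1, 1, 0],
    [1, -1, 1, 1, 1, 0, 0, 1, -1, -1, 1],
    [1, -1, 1, 1, -1, 0, 1, 0, 1, 1, -1],
    [1, 1, 1, -1, -1, 0, -1, 1, 0, 1, 1],
    [1, -1, -1, -1, -1, 0, 1, -1, -1, 0, 1],
    [1, 1, 1, -1, 1, 0, 1, -1, 1, -1, 0],
    [1, 1, -1, 1, 1, 1, 0, 0, 1, -1, -1],
    [1, -1, 1, -1, -1, 1, 0, -1, 0, -1, -1],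
    [1, 1, 1, 1, -1, -1, 0, -1, 1, 0, 1],
    [1, 1, -1, -1, -1, -1, 0, 1, -1, -1, 0],
    [1, -1, -1, 1, -1, -1, -1, 0, 0, -1, 1],
    [1, -1, 1, -1, 1, 1, -1, 0, 1, 0, 1],
    [1, 1, 1, 1, 1, -1, -1, 0, -1, 1, 0],
    [1, 1, -1, -1, 1, -1, -1, -1, 0, 0, -1],
    [1, 1, -1, 1, -1, 1, 1, -1, 0, 1, 0],
    [1, -1, -1, 1, 1, -1, 1, 1, 1, 0, 0]]"

lemma length_line_vectors: "length line_vectors = 78"
  by (simp add: line_vectors_def)

lemma line_vectors_length_nonzero: "\<forall>x\<in>set line_vectors. length x = 11 \<and> int_inner x x \<noteq> 0"
  by code_simp

lemma line_vectors_admissible: "sorted_wrt admissible_angle line_vectors"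
  by code_simp

definition lines :: "nat \<Rightarrow> real ^ 11" where
  "lines i = sgn (vec_of_list (line_vectors ! i))"

lemma line_vector_nth:
  assumes "i < 78"
  shows "length (line_vectors ! i) = 11" "int_inner (line_vectors ! i) (line_vectors ! i) \<noteq> 0"
  using line_vectors_length_nonzero assms length_line_vectors by (auto simp: all_set_conv_all_nth)

lemma norm_lines:
  assumes "i < 78"
  shows "norm (lines i) = 1"
proof -
  have "(vec_of_list (line_vectors ! i) :: real ^ 11) \<bullet> vec_of_list (line_vectors ! i) \<noteq> 0"
    using line_vector_nth[OF assms] by (simp add: inner_vec_of_list)
  then show ?thesis by (auto simp: lines_def norm_sgn)
qed

lemma abs_inner_lines:
  "i < 78 \<Longrightarrow> j < 78 \<Longrightarrow> \<bar>lines i \<bullet> lines j\<bar> =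
    \<bar>of_int (int_inner (line_vectors ! i) (line_vectors ! j))\<bar> /
      sqrt (of_int (int_inner (line_vectors ! i) (line_vectors ! i)
        * int_inner (line_vectors ! j) (line_vectors ! j)))"
  unfolding lines_def by (rule abs_inner_sgn_vec_of_list) (simp_all add: line_vector_nth)

lemma abs_inner_lines_mem:
  assumes "i < 78" "j < 78" "i \<noteq> j"
  shows "\<bar>lines i \<bullet> lines j\<bar> \<in> {1/3, 1 / sqrt 11, 1/11, 0}"
proof -
  have ordered: "\<bar>lines i \<bullet> lines j\<bar> \<in> {1/3, 1 / sqrt 11, 1/11, 0}" if "i < j" "j < 78" for i j
    using that line_vectors_admissible abs_cos_admissible
    by (simp add: abs_inner_lines sorted_wrt_iff_nth_less length_line_vectors)
  show ?thesis
  proof (cases "i < j")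
    case True
    then show ?thesis using ordered assms by blast
  next
    case False
    then have "j < i" using assms by simp
    then show ?thesis using ordered[of j i] assms by (metis inner_commute)
  qed
qed

lemma angle_set_lines: "angle_set lines {..<78} = {1/3, 1 / sqrt 11, 1/11, 0}"
proof
  show "angle_set lines {..<78} \<subseteq> {1/3, 1 / sqrt 11, 1/11, 0}"
    unfolding angle_set_def using abs_inner_lines_mem by blast
  have attained: "\<bar>lines 0 \<bullet> lines 1\<bar> = 0" "\<bar>lines 0 \<bullet> lines 11\<bar> = 1 / sqrt 11"
    "\<bar>lines 11 \<bullet> lines 12\<bar> = 1/11" "\<bar>lines 0 \<bullet> lines 33\<bar> = 1/3"
    by (simp_all add: abs_inner_lines line_vectors_def int_inner_def)
  have angle_set_member: "\<bar>lines i \<bullet> lines j\<bar> \<in> angle_set lines {..<78}"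
    if "i < 78" "j < 78" "i \<noteq> j" for i j
    unfolding angle_set_def using that by blast
  show "{1/3, 1 / sqrt 11, 1/11, 0} \<subseteq> angle_set lines {..<78}"
    using angle_set_member[of 0 1] angle_set_member[of 0 11] angle_set_member[of 11 12]
      angle_set_member[of 0 33] attained by simp
qed

theorem mainTheorem9:
  shows "\<exists>phi :: nat \<Rightarrow> real ^ 11.
           (\<forall>i<78. norm (phi i) = 1) \<and>
           inj_on (\<lambda>i. span {phi i}) {..<78} \<and>
           angle_set phi {..<78} = {1/3, 1 / sqrt 11, 1/11, 0} \<and>
           coherence phi {..<78} = 1/3"
proof (intro exI[of _ lines] conjI allI impI)
  show "norm (lines i) = 1" if "i < 78" for i
    using that by (rule norm_lines)
  show "inj_on (\<lambda>i. span {lines i}) {..<78}"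
    by (rule inj_on_span_singleton) (simp_all add: norm_lines angle_set_lines)
  show "angle_set lines {..<78} = {1/3, 1 / sqrt 11, 1/11, 0}"
    by (rule angle_set_lines)
  have "1 / sqrt 11 \<le> (1/3 :: real)"
    by (simp add: divide_simps real_le_rsqrt)
  then show "coherence lines {..<78} = 1/3"
    unfolding coherence_def angle_set_lines by (intro cSup_eq_maximum) auto
qed

end
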